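(* Let $\lambda\ge1$, $\mu\ge0$, let $\varphi(z)=1+B_1z+B_2z^2+\cdots$ be as in the context, and let $f(z)=z+\sum_{n\ge2}a_nz^n\in\mathcal N^{\mu,\lambda}_\Sigma(\varphi)$. Put $x=(B_1-B_2)/B_1^2$. Then $$|a_3|\le\begin{cases}\dfrac{B_1}{2\lambda+\mu}, & x\in\Big(-\infty,\dfrac{-(3+\mu)(2\lambda+\mu)}{2(\lambda+\mu)^2}\Big]\cup\Big[\dfrac{(1-\mu)(2\lambda+\mu)}{2(\lambda+\mu)^2},\infty\Big),\\[3mm]\dfrac{2B_1^3}{|(2\lambda+\mu)(1+\mu)B_1^2+2(B_1-B_2)(\lambda+\mu)^2|}, & x\in\Big[\dfrac{-(3+\mu)(2\lambda+\mu)}{2(\lambda+\mu)^2},\dfrac{-(1+\mu)(2\lambda+\mu)}{2(\lambda+\mu)^2}\Big)\cup\Big(\dfrac{-(1+\mu)(2\lambda+\mu)}{2(\lambda+\mu)^2},\dfrac{(1-\mu)(2\lambda+\mu)}{2(\lambda+\mu)^2}\Big].\end{cases}$$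
   Context: Let $\mathbb U=\{z\in\mathbb C:|z|<1\}$ and let $\mathcal A$ be the class of functions $f(z)=z+\sum_{n\ge2}a_nz^n$ analytic in $\mathbb U$. $\Sigma$ denotes the class of bi-univalent functions: $f\in\mathcal A$ univalent in $\mathbb U$ such that the inverse $f^{-1}$ (defined near $0$) extends to an analytic univalent function on $\mathbb U$; this extension is denoted $g=f^{-1}$. For $F,G$ analytic in $\mathbb U$, $F\prec G$ means there is an analytic $w:\mathbb U\to\mathbb U$ with $w(0)=0$ and $F=G\circ w$. Throughout, $\varphi$ is analytic and univalent in $\mathbb U$ with $\Re\varphi>0$, $\varphi(0)=1$, $\varphi'(0)>0$, $\varphi(\mathbb U)$ starlike with respect to $1$ and symmetric with respect to the real axis, and $\varphi(z)=1+B_1z+B_2z^2+\cdots$ with all $B_j$ real and $B_1>0$. For $\lambda\ge1$, $\mu\ge0$, $\mathcal N^{\mu,\lambda}_\Sigma(\varphi)$ is the set of $f\in\Sigma$ with $(1-\lambda)(f(z)/z)^{\mu}+\lambda f'(z)(f(z)/z)^{\mu-1}\prec\varphi(z)$ and $(1-\lambda)(g(w)/w)^{\mu}+\lambda g'(w)(g(w)/w)^{\mu-1}\prec\varphi(w)$, where $g=f^{-1}$ and powers are principal branches equal to $1$ at the origin. *)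

theory Defs
  imports "HOL-Analysis.Analysis"
begin

abbreviation UD :: "complex set" where "UD \<equiv> ball 0 1"

definition taylor_coeff :: "(complex \<Rightarrow> complex) \<Rightarrow> nat \<Rightarrow> complex" where
  "taylor_coeff f n = (deriv ^^ n) f 0 / of_nat (fact n)"

definition subordinate :: "(complex \<Rightarrow> complex) \<Rightarrow> (complex \<Rightarrow> complex) \<Rightarrow> bool" where
  "subordinate F G \<longleftrightarrow> (\<exists>w. w holomorphic_on UD \<and> w ` UD \<subseteq> UD \<and> w 0 = 0 \<and>
      (\<forall>z\<in>UD. F z = G (w z)))"

definition normalized_univalent :: "(complex \<Rightarrow> complex) \<Rightarrow> bool" where
  "normalized_univalent f \<longleftrightarrow> f holomorphic_on UD \<and> inj_on f UD \<and> f 0 = 0 \<and> deriv f 0 = 1"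

definition bi_univalent_inverse :: "(complex \<Rightarrow> complex) \<Rightarrow> (complex \<Rightarrow> complex) \<Rightarrow> bool" where
  "bi_univalent_inverse f g \<longleftrightarrow> normalized_univalent f \<and>
      g holomorphic_on UD \<and> inj_on g UD \<and>
      (\<exists>r>0. \<forall>w\<in>ball 0 r. g w \<in> UD \<and> f (g w) = w)"

definition bi_univalent :: "(complex \<Rightarrow> complex) \<Rightarrow> bool" where
  "bi_univalent f \<longleftrightarrow> (\<exists>g. bi_univalent_inverse f g)"

text \<open>f(z)/z, with its removable singularity at 0 filled by f'(0) = 1.\<close>
definition quot0 :: "(complex \<Rightarrow> complex) \<Rightarrow> complex \<Rightarrow> complex" where
  "quot0 f z = (if z = 0 then 1 else f z / z)"

text \<open>(1-lam)(f(z)/z)^mu + lam f'(z) (f(z)/z)^(mu-1), principal branches.\<close>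
definition N_operator :: "real \<Rightarrow> real \<Rightarrow> (complex \<Rightarrow> complex) \<Rightarrow> complex \<Rightarrow> complex" where
  "N_operator mu lam f z =
     (1 - of_real lam) * quot0 f z powr of_real mu
     + of_real lam * deriv f z * quot0 f z powr of_real (mu - 1)"

definition admissible_phi :: "(complex \<Rightarrow> complex) \<Rightarrow> bool" where
  "admissible_phi \<phi> \<longleftrightarrow> \<phi> holomorphic_on UD \<and> inj_on \<phi> UD \<and>
     (\<forall>z\<in>UD. Re (\<phi> z) > 0) \<and> \<phi> 0 = 1 \<and>
     deriv \<phi> 0 \<in> \<real> \<and> Re (deriv \<phi> 0) > 0 \<and>
     (\<forall>u\<in>\<phi> ` UD. closed_segment 1 u \<subseteq> \<phi> ` UD) \<and>
     (\<forall>u\<in>\<phi> ` UD. cnj u \<in> \<phi> ` UD) \<and>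
     (\<forall>j. taylor_coeff \<phi> j \<in> \<real>) \<and> Re (taylor_coeff \<phi> 1) > 0"

definition N_class :: "real \<Rightarrow> real \<Rightarrow> (complex \<Rightarrow> complex) \<Rightarrow> (complex \<Rightarrow> complex) \<Rightarrow> bool" where
  "N_class mu lam \<phi> f \<longleftrightarrow> bi_univalent f \<and>
     (\<forall>g. bi_univalent_inverse f g \<longrightarrow>
        subordinate (N_operator mu lam f) \<phi> \<and> subordinate (N_operator mu lam g) \<phi>)"

end

theory Submission
  imports Defs "HOL-Complex_Analysis.Complex_Analysis"
begin

(* Both f and its inverse g = f^{-1} satisfy a subordination
     N_operator mu lam h = phi o w,   w a Schwarz function,
   and comparing the first two Taylor coefficients of both sides gives
     (lam+mu) a_2 = B_1 w_1,   (2lam+mu) (a_3 + (mu-1)/2 a_2^2) = B_1 w_2 + B_2 w_1^2,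
   together with the analogous equations for g, whose coefficients are -a_2 and
   2a_2^2 - a_3.  The Schwarz-Pick inequality |w_2| <= 1 - |w_1|^2 bounds
   P = w_2 + w_1^2 and Q = v_2 + v_1^2 by 1, and eliminating a_2 gives
     a_3 = B_1/E (P + Q) + B_1/(2(2lam+mu)) (P - Q),
   with E = (2lam+mu)(1+mu) + 2(lam+mu)^2 (B_1-B_2)/B_1^2.  Hence
   |a_3| <= max (2B_1/|E|) (B_1/(2lam+mu)), and the two regions of the statement
   are exactly |E| >= 2(2lam+mu) and 0 < |E| <= 2(2lam+mu). *)

section \<open>Formal power series\<close>

lemma fps_compose_coeffs:
  fixes F G :: "'a::field fps"
  assumes "fps_nth G 0 = 0"
  shows "fps_nth (F oo G) 1 = fps_nth F 1 * fps_nth G 1"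
    and "fps_nth (F oo G) 2 = fps_nth F 1 * fps_nth G 2 + fps_nth F 2 * fps_nth G 1 ^ 2"
    and "fps_nth (F oo G) 3 = fps_nth F 1 * fps_nth G 3
           + 2 * fps_nth F 2 * fps_nth G 1 * fps_nth G 2 + fps_nth F 3 * fps_nth G 1 ^ 3"
proof -
  note coeff_simps = fps_compose_nth fps_mult_nth atLeast0AtMost numeral_3_eq_3
    numeral_2_eq_2 sum.atMost_Suc assms
  have cube: "G ^ 3 = G * (G * G)" by (simp add: power3_eq_cube mult.assoc)
  show "fps_nth (F oo G) 1 = fps_nth F 1 * fps_nth G 1"
    by (simp add: coeff_simps)
  show "fps_nth (F oo G) 2 = fps_nth F 1 * fps_nth G 2 + fps_nth F 2 * fps_nth G 1 ^ 2"
    by (simp add: coeff_simps power2_eq_square)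
  show "fps_nth (F oo G) 3 = fps_nth F 1 * fps_nth G 3
           + 2 * fps_nth F 2 * fps_nth G 1 * fps_nth G 2 + fps_nth F 3 * fps_nth G 1 ^ 3"
    by (simp add: coeff_simps power2_eq_square cube algebra_simps)
qed

lemma fps_inverse_coeffs:
  fixes F G :: "'a::field fps"
  assumes inverse: "F oo G = fps_X" and G0: "fps_nth G 0 = 0" and F1: "fps_nth F 1 = 1"
  shows "fps_nth G 1 = 1" and "fps_nth G 2 = - fps_nth F 2"
    and "fps_nth G 3 = 2 * fps_nth F 2 ^ 2 - fps_nth F 3"
proof -
  show G1: "fps_nth G 1 = 1"
    using fps_compose_coeffs(1)[OF G0, of F] F1 inverse by simp
  show G2: "fps_nth G 2 = - fps_nth F 2"
    using fps_compose_coeffs(2)[OF G0, of F] F1 G1 inverse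
    by (simp add: eq_neg_iff_add_eq_0 add.commute)
  show "fps_nth G 3 = 2 * fps_nth F 2 ^ 2 - fps_nth F 3"
    using fps_compose_coeffs(3)[OF G0, of F] F1 G1 G2 inverse
    by (simp add: algebra_simps power2_eq_square)
qed

lemma has_fps_expansion_unique:
  fixes f :: "complex \<Rightarrow> complex"
  assumes "f has_fps_expansion F" and "f has_fps_expansion G"
  shows "F = G"
  using assms by (simp add: fps_eq_iff fps_nth_fps_expansion)

lemma has_fps_expansion_transfer:
  assumes "f has_fps_expansion F" and "eventually (\<lambda>z. f z = g z) (nhds 0)"
  shows "g has_fps_expansion F"
  using has_fps_expansion_cong[OF assms(2) refl] assms(1) by simp

lemma taylor_coeff_fps_nth:
  assumes "f has_fps_expansion F"
  shows "taylor_coeff f n = fps_nth F n"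
  unfolding taylor_coeff_def fps_nth_fps_expansion[OF assms] by simp

lemma gbinomial_1_2: "(a::complex) gchoose Suc 0 = a" "a gchoose Suc (Suc 0) = a * (a - 1) / 2"
  by (simp_all add: gbinomial_Suc numeral_2_eq_2 atLeast0AtMost)

section \<open>Analytic facts\<close>

text \<open>Both powers are binomial series composed with \<open>h/z - 1\<close>.\<close>
lemma N_operator_expansion:
  fixes h :: "complex \<Rightarrow> complex" and H :: "complex fps"
  assumes hH: "h has_fps_expansion H" and H0: "fps_nth H 0 = 0" and H1: "fps_nth H 1 = 1"
  obtains N where "N_operator mu lam h has_fps_expansion N"
    and "fps_nth N 1 = of_real (lam + mu) * fps_nth H 2"
    and "fps_nth N 2 = of_real (2 * lam + mu) * (fps_nth H 3 + of_real ((mu - 1) / 2) * fps_nth H 2 ^ 2)"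
proof -
  have H1': "fps_nth H (Suc 0) = 1" using H1 by simp
  have "1 \<le> subdegree H" using H0 H1 by (intro subdegree_geI) auto
  then have "(\<lambda>z. if z = 0 then fps_nth H 1 else h z / z ^ 1) has_fps_expansion fps_shift 1 H"
    by (rule has_fps_expansion_shift[OF hH]) simp
  also have "(\<lambda>z. if z = 0 then fps_nth H 1 else h z / z ^ 1) = quot0 h"
    by (rule ext) (simp add: quot0_def H1 H1')
  finally have quot: "quot0 h has_fps_expansion fps_shift 1 H" .
  define D where "D = fps_shift 1 H - 1"
  have D0: "fps_nth D 0 = 0" and D1: "fps_nth D 1 = fps_nth H 2" and D2: "fps_nth D 2 = fps_nth H 3"
    by (simp_all add: D_def H1' numeral_3_eq_3 numeral_2_eq_2)
  have powr: "(\<lambda>z. quot0 h z powr a) has_fps_expansion (fps_binomial a oo D)" for a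
  proof -
    have "(\<lambda>z. quot0 h z - 1) has_fps_expansion D"
      unfolding D_def by (intro has_fps_expansion_diff quot has_fps_expansion_1)
    then have "((\<lambda>u. (1 + u) powr a) \<circ> (\<lambda>z. quot0 h z - 1)) has_fps_expansion (fps_binomial a oo D)"
      by (intro has_fps_expansion_compose has_fps_expansion_binomial_complex D0)
    then show ?thesis by (simp add: o_def)
  qed
  have binom1: "fps_nth (fps_binomial a oo D) (Suc 0) = a * fps_nth H 2" for a
    using fps_compose_coeffs(1)[OF D0, of "fps_binomial a"] D1 by (simp add: gbinomial_1_2)
  have binom2: "fps_nth (fps_binomial a oo D) (Suc (Suc 0))
      = a * fps_nth H 3 + a * (a - 1) / 2 * fps_nth H 2 ^ 2" for a
    using fps_compose_coeffs(2)[OF D0, of "fps_binomial a"] D1 D2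
    by (simp add: gbinomial_1_2 numeral_2_eq_2)
  define N where "N = fps_const (1 - of_real lam) * (fps_binomial (of_real mu) oo D)
     + fps_const (of_real lam) * fps_deriv H * (fps_binomial (of_real (mu - 1)) oo D)"
  note coeff_simps = binom1 binom2 fps_mult_nth atLeast0AtMost numeral_3_eq_3 numeral_2_eq_2
    sum.atMost_Suc H1'
  show ?thesis
  proof
    show "N_operator mu lam h has_fps_expansion N"
      unfolding N_def N_operator_def
      by (intro has_fps_expansion_add has_fps_expansion_cmult_left has_fps_expansion_mult
          has_fps_expansion_deriv hH powr)
    show "fps_nth N 1 = of_real (lam + mu) * fps_nth H 2"
      unfolding N_def by (simp add: coeff_simps algebra_simps)
    show "fps_nth N 2 = of_real (2 * lam + mu) * (fps_nth H 3 + of_real ((mu - 1) / 2) * fps_nth H 2 ^ 2)"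
      unfolding N_def
      by (simp add: coeff_simps algebra_simps power2_eq_square) (simp add: field_simps)
  qed
qed

lemma Moebius_function_deriv_at_zero:
  fixes a :: complex
  assumes "norm a < 1"
  shows "(Moebius_function 0 a has_field_derivative 1 / (1 - cnj a * a)) (at a)"
proof -
  have "cnj a * a = of_real (norm a ^ 2)"
    using complex_norm_square[of a] by (simp add: mult.commute)
  moreover have "norm a ^ 2 < 1"
    using assms by (simp add: power_less_one_iff)
  ultimately have nonzero: "1 - cnj a * a \<noteq> 0"
    by (metis eq_iff_diff_eq_0 less_irrefl of_real_1 of_real_eq_iff)
  have "((\<lambda>u. (u - a) / (1 - cnj a * u)) has_field_derivative
      (1 * (1 - cnj a * a) - (a - a) * (- cnj a)) / ((1 - cnj a * a) * (1 - cnj a * a))) (at a)"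
    by (rule derivative_eq_intros refl nonzero | simp)+
  then show ?thesis
    using nonzero by (simp add: Moebius_function_simple[abs_def])
qed

text \<open>If \<open>|h|\<close> reaches 1, \<open>h\<close> is constant by the maximum
  modulus principle; otherwise the Schwarz lemma applies to \<open>h\<close> followed by the disc
  automorphism moving \<open>h(0)\<close> to 0.\<close>
lemma schwarz_pick_at_origin:
  assumes holh: "h holomorphic_on UD" and bounded: "\<And>z. z \<in> UD \<Longrightarrow> norm (h z) \<le> 1"
  shows "norm (deriv h 0) \<le> 1 - norm (h 0) ^ 2"
proof (cases "\<exists>\<xi>\<in>UD. norm (h \<xi>) = 1")
  case True
  then obtain \<xi> where \<xi>: "\<xi> \<in> UD" "norm (h \<xi>) = 1" by blast
  have "h constant_on UD"
    by (rule maximum_modulus_principle[OF holh _ _ _ order_refl \<xi>(1)]) (use bounded \<xi> in auto)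
  then obtain c where c: "\<And>z. z \<in> UD \<Longrightarrow> h z = c"
    by (auto simp: constant_on_def)
  have "eventually (\<lambda>z. h z = c) (nhds 0)"
    using eventually_nhds_in_open[of UD 0] by (auto elim!: eventually_mono simp: c)
  then have "deriv h 0 = deriv (\<lambda>_. c) 0"
    by (rule deriv_cong_ev) simp
  moreover have "norm (h 0) = 1"
    using c \<xi> by simp
  ultimately show ?thesis by simp
next
  case False
  with bounded have less1: "\<And>z. z \<in> UD \<Longrightarrow> norm (h z) < 1"
    by (meson order.not_eq_order_implies_strict)
  define a where "a = h 0"
  have a: "norm a < 1" using less1[of 0] by (simp add: a_def)
  define k where "k = Moebius_function 0 a \<circ> h"
  have holk: "k holomorphic_on UD" unfolding k_def
    by (rule holomorphic_on_compose_gen[OF holh Moebius_function_holomorphic[OF a]])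
       (use less1 in auto)
  have "norm (deriv k 0) \<le> 1"
  proof (rule Schwarz_Lemma(2)[OF holk, where \<xi> = 0])
    show "k 0 = 0" by (simp add: k_def a_def Moebius_function_eq_zero)
    show "norm (k z) < 1" if "norm z < 1" for z
      using Moebius_function_norm_lt_1[OF a less1] that by (simp add: k_def)
  qed simp
  moreover have "deriv k 0 = deriv h 0 / of_real (1 - norm a ^ 2)"
  proof -
    have "(h has_field_derivative deriv h 0) (at 0)"
      using holh by (intro holomorphic_derivI[of _ UD]) auto
    from DERIV_chain[OF Moebius_function_deriv_at_zero[OF a, unfolded a_def] this]
    have "deriv k 0 = deriv h 0 / (1 - cnj a * a)"
      by (simp add: k_def a_def DERIV_imp_deriv)
    also have "1 - cnj a * a = of_real (1 - norm a ^ 2)"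
      using complex_norm_square[of a] by (simp add: mult.commute)
    finally show ?thesis .
  qed
  moreover have pos: "1 - norm a ^ 2 > 0"
    using a by (simp add: power_less_one_iff)
  moreover have "norm (complex_of_real (1 - norm a ^ 2)) = 1 - norm a ^ 2"
    by (simp only: norm_of_real abs_of_pos[OF pos])
  ultimately have "norm (deriv h 0) / (1 - norm a ^ 2) \<le> 1"
    by (simp only: norm_divide)
  then show ?thesis
    using pos by (simp add: divide_le_eq a_def)
qed

text \<open>Write \<open>w(z) = z h(z)\<close>; the Schwarz lemma gives \<open>|h| \<le> 1\<close>,
  and \<open>w\<^sub>1 = h(0)\<close>, \<open>w\<^sub>2 = h'(0)\<close>.\<close>
lemma schwarz_function_coeffs:
  assumes holw: "w holomorphic_on UD" and wU: "w ` UD \<subseteq> UD" and w0: "w 0 = 0"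
    and wW: "w has_fps_expansion W"
  shows "norm (fps_nth W 2) \<le> 1 - norm (fps_nth W 1) ^ 2"
proof -
  obtain h where holh: "h holomorphic_on UD" and wh: "\<And>z. norm z < 1 \<Longrightarrow> w z = z * h z"
    and dh: "deriv w 0 = h 0"
    using Schwarz3[OF holw w0] by blast
  have less1: "\<And>z. norm z < 1 \<Longrightarrow> norm (w z) < 1"
    using wU by (force simp: image_subset_iff)
  have "(\<lambda>z. z * h z) has_fps_expansion fps_X * fps_expansion h 0"
    using holh by (intro has_fps_expansion_mult has_fps_expansion_fps_X
        has_fps_expansion_fps_expansion[of UD]) auto
  moreover have "eventually (\<lambda>z. z * h z = w z) (nhds 0)"
    using eventually_nhds_in_open[of UD 0] by (auto elim!: eventually_mono simp: wh)
  ultimately have "w has_fps_expansion fps_X * fps_expansion h 0"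
    by (rule has_fps_expansion_transfer)
  then have "W = fps_X * fps_expansion h 0"
    using wW has_fps_expansion_unique by blast
  then have W1: "fps_nth W 1 = h 0" and W2: "fps_nth W 2 = deriv h 0"
    by (simp_all add: fps_expansion_def numeral_2_eq_2)
  have "norm (h z) \<le> 1" if "z \<in> UD" for z
  proof (cases "z = 0")
    case True
    then show ?thesis
      using Schwarz_Lemma(2)[OF holw w0 less1, of 0] dh by simp
  next
    case False
    have "norm (z * h z) \<le> norm z"
      using Schwarz_Lemma(1)[OF holw w0 less1, of z] wh that by simp
    then show ?thesis
      using False by (simp add: norm_mult)
  qed
  then show ?thesis
    using schwarz_pick_at_origin[OF holh] W1 W2 by simp
qed

text \<open>If \<open>N_operator \<mu> \<lambda> h \<prec> \<phi>\<close> for \<open>h(z) = z + a\<^sub>2 z\<^sup>2 + a\<^sub>3 z\<^sup>3 + \<dots>\<close>, then comparing the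
  coefficients of \<open>z\<close> and \<open>z\<^sup>2\<close> in \<open>N_operator \<mu> \<lambda> h = \<phi> \<circ> w\<close> gives two equations in the
  first two coefficients of the Schwarz function \<open>w\<close>, which obey Schwarz-Pick.\<close>
lemma subordination_coeffs:
  fixes h \<phi> :: "complex \<Rightarrow> complex"
  assumes hol\<phi>: "\<phi> holomorphic_on UD"
    and holh: "h holomorphic_on UD" and h0: "h 0 = 0" and dh0: "deriv h 0 = 1"
    and sub: "subordinate (N_operator mu lam h) \<phi>"
  obtains w1 w2 :: complex where "norm w2 \<le> 1 - norm w1 ^ 2"
    and "of_real (lam + mu) * taylor_coeff h 2 = taylor_coeff \<phi> 1 * w1"
    and "of_real (2 * lam + mu) * (taylor_coeff h 3 + of_real ((mu - 1) / 2) * taylor_coeff h 2 ^ 2)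
           = taylor_coeff \<phi> 1 * w2 + taylor_coeff \<phi> 2 * w1 ^ 2"
proof -
  from sub obtain w where holw: "w holomorphic_on UD" and wU: "w ` UD \<subseteq> UD" and w0: "w 0 = 0"
    and weq: "\<And>z. z \<in> UD \<Longrightarrow> N_operator mu lam h z = \<phi> (w z)"
    unfolding subordinate_def by blast
  define H where "H = fps_expansion h 0"
  define W where "W = fps_expansion w 0"
  define \<Phi> where "\<Phi> = fps_expansion \<phi> 0"
  have hH: "h has_fps_expansion H" and wW: "w has_fps_expansion W"
    and \<phi>\<Phi>: "\<phi> has_fps_expansion \<Phi>"
    unfolding H_def W_def \<Phi>_def using holh holw hol\<phi>
    by (auto intro!: has_fps_expansion_fps_expansion[of UD])
  have W0: "fps_nth W 0 = 0"
    using fps_nth_fps_expansion[OF wW, of 0] w0 by simp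
  obtain N where NE: "N_operator mu lam h has_fps_expansion N"
    and N1: "fps_nth N 1 = of_real (lam + mu) * fps_nth H 2"
    and N2: "fps_nth N 2 = of_real (2 * lam + mu) * (fps_nth H 3 + of_real ((mu - 1) / 2) * fps_nth H 2 ^ 2)"
  proof (rule N_operator_expansion[OF hH])
    show "fps_nth H 0 = 0" "fps_nth H 1 = 1"
      using fps_nth_fps_expansion[OF hH, of 0] fps_nth_fps_expansion[OF hH, of 1] h0 dh0 by simp_all
  qed
  have "(\<phi> \<circ> w) has_fps_expansion (\<Phi> oo W)"
    by (rule has_fps_expansion_compose[OF \<phi>\<Phi> wW W0])
  moreover have "eventually (\<lambda>z. (\<phi> \<circ> w) z = N_operator mu lam h z) (nhds 0)"
    using eventually_nhds_in_open[of UD 0] by (auto elim!: eventually_mono simp: weq)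
  ultimately have "N_operator mu lam h has_fps_expansion (\<Phi> oo W)"
    by (rule has_fps_expansion_transfer)
  then have NW: "N = \<Phi> oo W"
    using NE has_fps_expansion_unique by blast
  show ?thesis
  proof
    show "norm (fps_nth W 2) \<le> 1 - norm (fps_nth W 1) ^ 2"
      by (rule schwarz_function_coeffs[OF holw wU w0 wW])
    show "of_real (lam + mu) * taylor_coeff h 2 = taylor_coeff \<phi> 1 * fps_nth W 1"
      using fps_compose_coeffs(1)[OF W0, of \<Phi>] N1 NW
      by (simp add: taylor_coeff_fps_nth[OF hH] taylor_coeff_fps_nth[OF \<phi>\<Phi>])
    show "of_real (2 * lam + mu) * (taylor_coeff h 3 + of_real ((mu - 1) / 2) * taylor_coeff h 2 ^ 2)
           = taylor_coeff \<phi> 1 * fps_nth W 2 + taylor_coeff \<phi> 2 * fps_nth W 1 ^ 2"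
      using fps_compose_coeffs(2)[OF W0, of \<Phi>] N2 NW
      by (simp add: taylor_coeff_fps_nth[OF hH] taylor_coeff_fps_nth[OF \<phi>\<Phi>])
  qed
qed

text \<open>The inverse \<open>g\<close> of a bi-univalent \<open>f = z + a\<^sub>2 z\<^sup>2 + a\<^sub>3 z\<^sup>3 + \<dots>\<close> is normalized and has
  coefficients \<open>-a\<^sub>2\<close> and \<open>2a\<^sub>2\<^sup>2 - a\<^sub>3\<close>, since \<open>f \<circ> g = id\<close> near 0.\<close>
lemma bi_univalent_inverse_coeffs:
  assumes "bi_univalent_inverse f g"
  shows "g holomorphic_on UD" and "g 0 = 0" and "deriv g 0 = 1"
    and "taylor_coeff g 2 = - taylor_coeff f 2"
    and "taylor_coeff g 3 = 2 * taylor_coeff f 2 ^ 2 - taylor_coeff f 3"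
proof -
  from assms have holf: "f holomorphic_on UD" and injf: "inj_on f UD" and f0: "f 0 = 0"
    and df0: "deriv f 0 = 1" and holg: "g holomorphic_on UD"
    and "\<exists>r>0. \<forall>w\<in>ball 0 r. g w \<in> UD \<and> f (g w) = w"
    unfolding bi_univalent_inverse_def normalized_univalent_def by blast+
  then obtain r where r: "r > 0" and fg: "\<And>w. w \<in> ball 0 r \<Longrightarrow> g w \<in> UD \<and> f (g w) = w"
    by blast
  show "g holomorphic_on UD" by (fact holg)
  show g0: "g 0 = 0"
    using fg[of 0] r injf f0 by (metis centre_in_ball inj_onD zero_less_one)
  define F where "F = fps_expansion f 0"
  define G where "G = fps_expansion g 0"
  have fF: "f has_fps_expansion F" and gG: "g has_fps_expansion G"
    unfolding F_def G_def using holf holg by (auto intro!: has_fps_expansion_fps_expansion[of UD])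
  have G0: "fps_nth G 0 = 0" and F1: "fps_nth F 1 = 1"
    using fps_nth_fps_expansion[OF gG, of 0] fps_nth_fps_expansion[OF fF, of 1] g0 df0 by simp_all
  have "(f \<circ> g) has_fps_expansion (F oo G)"
    by (rule has_fps_expansion_compose[OF fF gG G0])
  moreover have "eventually (\<lambda>w. (f \<circ> g) w = w) (nhds 0)"
    using eventually_nhds_in_open[of "ball 0 r" 0] r fg by (auto elim!: eventually_mono)
  ultimately have "(\<lambda>w. w) has_fps_expansion (F oo G)"
    by (rule has_fps_expansion_transfer)
  then have inverse: "F oo G = fps_X"
    using has_fps_expansion_fps_X has_fps_expansion_unique by blast
  note G_coeffs = fps_inverse_coeffs[OF inverse G0 F1]
  show "deriv g 0 = 1"
    using G_coeffs(1) fps_nth_fps_expansion[OF gG, of 1] by simp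
  show "taylor_coeff g 2 = - taylor_coeff f 2"
    using G_coeffs(2) by (simp add: taylor_coeff_fps_nth[OF fF] taylor_coeff_fps_nth[OF gG])
  show "taylor_coeff g 3 = 2 * taylor_coeff f 2 ^ 2 - taylor_coeff f 3"
    using G_coeffs(3) by (simp add: taylor_coeff_fps_nth[OF fF] taylor_coeff_fps_nth[OF gG])
qed

section \<open>The coefficient algebra\<close>

text \<open>For \<open>|P|, |Q| \<le> 1\<close> and real \<open>\<alpha>, \<beta>\<close>: \<open>|\<alpha>(P+Q) + \<beta>(P-Q)| \<le> |\<alpha>+\<beta>| + |\<alpha>-\<beta>| = 2 max |\<alpha>| |\<beta>|\<close>.\<close>
lemma norm_sum_diff_bound:
  fixes P Q :: complex and \<alpha> \<beta> :: real
  assumes "norm P \<le> 1" and "norm Q \<le> 1"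
  shows "norm (of_real \<alpha> * (P + Q) + of_real \<beta> * (P - Q)) \<le> 2 * max \<bar>\<alpha>\<bar> \<bar>\<beta>\<bar>"
proof -
  have "of_real \<alpha> * (P + Q) + of_real \<beta> * (P - Q) = of_real (\<alpha> + \<beta>) * P + of_real (\<alpha> - \<beta>) * Q"
    by (simp add: algebra_simps)
  then have "norm (of_real \<alpha> * (P + Q) + of_real \<beta> * (P - Q)) \<le> \<bar>\<alpha> + \<beta>\<bar> * norm P + \<bar>\<alpha> - \<beta>\<bar> * norm Q"
    by (metis norm_triangle_ineq norm_mult norm_of_real)
  also have "\<dots> \<le> \<bar>\<alpha> + \<beta>\<bar> + \<bar>\<alpha> - \<beta>\<bar>"
    using assms by (intro add_mono) (auto intro: mult_left_le)
  also have "\<dots> = 2 * max \<bar>\<alpha>\<bar> \<bar>\<beta>\<bar>"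
    by (auto simp: max_def abs_if)
  finally show ?thesis .
qed

text \<open>Elimination of \<open>a\<^sub>2\<close> from the four coefficient equations for \<open>f\<close> and its inverse:
  with \<open>P = w\<^sub>2 + w\<^sub>1\<^sup>2\<close>, \<open>Q = v\<^sub>2 + v\<^sub>1\<^sup>2\<close> and \<open>s = 2\<lambda>+\<mu>\<close>, the difference of the second-order
  equations gives \<open>2s(a\<^sub>3 - a\<^sub>2\<^sup>2) = B\<^sub>1(P - Q)\<close>, and their sum together with the first-order
  equation gives \<open>E a\<^sub>2\<^sup>2 = B\<^sub>1(P + Q)\<close>.\<close>
lemma a3_representation:
  fixes a2 a3 w1 w2 v1 v2 :: complex and lam mu B1 B2 :: real
  assumes B1: "B1 > 0" and s: "2 * lam + mu > 0"
    and E1: "of_real (lam + mu) * a2 = of_real B1 * w1"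
    and E2: "of_real (2 * lam + mu) * (a3 + of_real ((mu - 1) / 2) * a2 ^ 2)
               = of_real B1 * w2 + of_real B2 * w1 ^ 2"
    and E3: "of_real (lam + mu) * (- a2) = of_real B1 * v1"
    and E4: "of_real (2 * lam + mu) * ((2 * a2 ^ 2 - a3) + of_real ((mu - 1) / 2) * (- a2) ^ 2)
               = of_real B1 * v2 + of_real B2 * v1 ^ 2"
  defines "E \<equiv> (2 * lam + mu) * (1 + mu) + 2 * (lam + mu) ^ 2 * (B1 - B2) / B1 ^ 2"
  assumes E: "E \<noteq> 0"
  shows "a3 = of_real (B1 / E) * ((w2 + w1 ^ 2) + (v2 + v1 ^ 2))
              + of_real (B1 / (2 * (2 * lam + mu))) * ((w2 + w1 ^ 2) - (v2 + v1 ^ 2))"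
proof -
  define P where "P = w2 + w1 ^ 2"
  define Q where "Q = v2 + v1 ^ 2"
  have "of_real B1 * v1 = of_real B1 * (- w1)"
    using E1 E3 by (metis minus_mult_right)
  moreover have "(of_real B1 :: complex) \<noteq> 0"
    using B1 by simp
  ultimately have v1: "v1 = - w1"
    by (rule mult_left_cancel[THEN iffD1, rotated])
  have diff: "of_real (2 * lam + mu) * (2 * a3 - 2 * a2 ^ 2) = of_real B1 * (P - Q)"
    using E2 E4 unfolding P_def Q_def v1 of_real_add of_real_mult of_real_diff of_real_divide
      of_real_numeral of_real_1 by algebra
  have sum: "of_real (2 * lam + mu) * of_real (1 + mu) * a2 ^ 2
      = of_real B1 * (w2 + v2) + 2 * of_real B2 * w1 ^ 2"
  proof -
    have "2 * (of_real ((mu - 1) / 2) :: complex) = of_real mu - 1"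
      by simp
    then show ?thesis
      using E2 E4 unfolding v1 of_real_add of_real_mult of_real_numeral of_real_1 by algebra
  qed
  have "of_real E * a2 ^ 2 = of_real B1 * (P + Q)"
  proof -
    have "B1 ^ 2 * E = (2 * lam + mu) * (1 + mu) * B1 ^ 2 + 2 * (B1 - B2) * (lam + mu) ^ 2"
      using B1 unfolding E_def by (simp add: field_simps)
    then have "of_real (B1 ^ 2) * (of_real E * a2 ^ 2)
        = of_real ((2 * lam + mu) * (1 + mu) * B1 ^ 2 + 2 * (B1 - B2) * (lam + mu) ^ 2) * a2 ^ 2"
      by (metis mult.assoc of_real_mult)
    also have "\<dots> = of_real (B1 ^ 2) * (of_real B1 * (P + Q))"
      using E1 sum unfolding P_def Q_def v1 of_real_add of_real_mult of_real_diff
        of_real_numeral of_real_1 of_real_power by algebra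
    finally show ?thesis
      using B1 by simp
  qed
  then have "a2 ^ 2 = of_real (B1 / E) * (P + Q)"
    using E by (simp add: field_simps)
  moreover have "a3 = a2 ^ 2 + of_real (B1 / (2 * (2 * lam + mu))) * (P - Q)"
  proof -
    have "(a3 - a2 ^ 2) * of_real (2 * (2 * lam + mu)) = of_real B1 * (P - Q)"
      using diff by (simp add: algebra_simps)
    moreover have "(of_real (2 * (2 * lam + mu)) :: complex) \<noteq> 0"
      using s by (simp only: of_real_eq_0_iff) simp
    ultimately have "a3 - a2 ^ 2 = of_real B1 * (P - Q) / of_real (2 * (2 * lam + mu))"
      by (rule eq_divide_imp[rotated])
    then show ?thesis
      by (simp add: algebra_simps)
  qed
  ultimately show ?thesis
    by (simp add: P_def Q_def)
qed

lemma a3_bound: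
  fixes a2 a3 w1 w2 v1 v2 :: complex and lam mu B1 B2 :: real
  assumes B1: "B1 > 0" and s: "2 * lam + mu > 0"
    and E1: "of_real (lam + mu) * a2 = of_real B1 * w1"
    and E2: "of_real (2 * lam + mu) * (a3 + of_real ((mu - 1) / 2) * a2 ^ 2)
               = of_real B1 * w2 + of_real B2 * w1 ^ 2"
    and E3: "of_real (lam + mu) * (- a2) = of_real B1 * v1"
    and E4: "of_real (2 * lam + mu) * ((2 * a2 ^ 2 - a3) + of_real ((mu - 1) / 2) * (- a2) ^ 2)
               = of_real B1 * v2 + of_real B2 * v1 ^ 2"
    and w: "norm w2 \<le> 1 - norm w1 ^ 2" and v: "norm v2 \<le> 1 - norm v1 ^ 2"
  defines "E \<equiv> (2 * lam + mu) * (1 + mu) + 2 * (lam + mu) ^ 2 * (B1 - B2) / B1 ^ 2"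
  assumes E: "E \<noteq> 0"
  shows "norm a3 \<le> max (2 * B1 / \<bar>E\<bar>) (B1 / (2 * lam + mu))"
proof -
  have "norm (w2 + w1 ^ 2) \<le> 1" and "norm (v2 + v1 ^ 2) \<le> 1"
    using norm_triangle_ineq[of w2 "w1 ^ 2"] norm_triangle_ineq[of v2 "v1 ^ 2"] w v
    by (simp_all add: norm_power)
  from norm_sum_diff_bound[OF this, of "B1 / E" "B1 / (2 * (2 * lam + mu))"]
  have "norm a3 \<le> 2 * max \<bar>B1 / E\<bar> \<bar>B1 / (2 * (2 * lam + mu))\<bar>"
    using a3_representation[OF B1 s E1 E2 E3 E4 E[unfolded E_def]] by (simp add: E_def)
  also have "\<dots> = max (2 * B1 / \<bar>E\<bar>) (B1 / (2 * lam + mu))"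
  proof -
    have "2 * \<bar>B1 / (2 * (2 * lam + mu))\<bar> = B1 / (2 * lam + mu)"
      using B1 s by (simp add: field_simps)
    then show ?thesis
      using B1 by (simp add: abs_divide max_mult_distrib_left)
  qed
  finally show ?thesis .
qed

lemma parameter_regions:
  fixes lam mu x :: real
  assumes "lam + mu \<noteq> 0" and s: "2 * lam + mu \<ge> 0"
  defines "c \<equiv> (2 * lam + mu) / (2 * (lam + mu) ^ 2)"
    and "E \<equiv> (2 * lam + mu) * (1 + mu) + 2 * (lam + mu) ^ 2 * x"
  shows "(x \<le> - (3 + mu) * c \<or> x \<ge> (1 - mu) * c) \<longleftrightarrow> 2 * (2 * lam + mu) \<le> \<bar>E\<bar>"
    and "((- (3 + mu) * c \<le> x \<and> x < - (1 + mu) * c) \<or> (- (1 + mu) * c < x \<and> x \<le> (1 - mu) * c))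
           \<longleftrightarrow> E \<noteq> 0 \<and> \<bar>E\<bar> \<le> 2 * (2 * lam + mu)"
proof -
  define K where "K = 2 * (lam + mu) ^ 2"
  have K: "K > 0"
    using assms(1) by (simp add: K_def)
  have "K * c = 2 * lam + mu"
    using K unfolding K_def c_def by (simp add: field_simps)
  then have Kyc: "K * (y * c) = y * (2 * lam + mu)" for y
    by (simp add: mult.left_commute)
  have scale: "x \<le> y * c \<longleftrightarrow> K * x \<le> y * (2 * lam + mu)"
    "y * c \<le> x \<longleftrightarrow> y * (2 * lam + mu) \<le> K * x"
    "x < y * c \<longleftrightarrow> K * x < y * (2 * lam + mu)"
    "y * c < x \<longleftrightarrow> y * (2 * lam + mu) < K * x" for y
    using mult_le_cancel_left_pos[OF K, of x "y * c"] mult_le_cancel_left_pos[OF K, of "y * c" x]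
      mult_less_cancel_left_pos[OF K, of x "y * c"] mult_less_cancel_left_pos[OF K, of "y * c" x]
    by (simp_all only: Kyc)
  have E: "E = (2 * lam + mu) * (1 + mu) + K * x"
    by (simp add: E_def K_def)
  show "(x \<le> - (3 + mu) * c \<or> x \<ge> (1 - mu) * c) \<longleftrightarrow> 2 * (2 * lam + mu) \<le> \<bar>E\<bar>"
    unfolding scale E using s by (auto simp: algebra_simps abs_if)
  show "((- (3 + mu) * c \<le> x \<and> x < - (1 + mu) * c) \<or> (- (1 + mu) * c < x \<and> x \<le> (1 - mu) * c))
           \<longleftrightarrow> E \<noteq> 0 \<and> \<bar>E\<bar> \<le> 2 * (2 * lam + mu)"
    unfolding scale E by (auto simp: algebra_simps abs_if)
qed

lemma a3_bound_by_regions: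
  fixes a2 a3 w1 w2 v1 v2 :: complex and lam mu B1 B2 :: real
  assumes lam: "lam \<ge> 1" and mu: "mu \<ge> 0" and B1: "B1 > 0"
    and E1: "of_real (lam + mu) * a2 = of_real B1 * w1"
    and E2: "of_real (2 * lam + mu) * (a3 + of_real ((mu - 1) / 2) * a2 ^ 2)
               = of_real B1 * w2 + of_real B2 * w1 ^ 2"
    and E3: "of_real (lam + mu) * (- a2) = of_real B1 * v1"
    and E4: "of_real (2 * lam + mu) * ((2 * a2 ^ 2 - a3) + of_real ((mu - 1) / 2) * (- a2) ^ 2)
               = of_real B1 * v2 + of_real B2 * v1 ^ 2"
    and w: "norm w2 \<le> 1 - norm w1 ^ 2" and v: "norm v2 \<le> 1 - norm v1 ^ 2"
  defines "x \<equiv> (B1 - B2) / B1 ^ 2"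
  defines "c \<equiv> (2 * lam + mu) / (2 * (lam + mu) ^ 2)"
  shows "(x \<le> - (3 + mu) * c \<or> x \<ge> (1 - mu) * c \<longrightarrow>
            norm a3 \<le> B1 / (2 * lam + mu))
       \<and> ((- (3 + mu) * c \<le> x \<and> x < - (1 + mu) * c) \<or> (- (1 + mu) * c < x \<and> x \<le> (1 - mu) * c) \<longrightarrow>
            norm a3 \<le> 2 * B1 ^ 3 / \<bar>(2 * lam + mu) * (1 + mu) * B1 ^ 2 + 2 * (B1 - B2) * (lam + mu) ^ 2\<bar>)"
proof -
  have s: "2 * lam + mu > 0" and "lam + mu \<noteq> 0"
    using lam mu by auto
  have half: "2 * B1 / (2 * (2 * lam + mu)) = B1 / (2 * lam + mu)"
    by (metis mult_divide_mult_cancel_left zero_neq_numeral)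
  define E where "E = (2 * lam + mu) * (1 + mu) + 2 * (lam + mu) ^ 2 * x"
  note regions = parameter_regions[OF \<open>lam + mu \<noteq> 0\<close> less_imp_le[OF s], of x,
      folded c_def E_def]
  have bound: "norm a3 \<le> max (2 * B1 / \<bar>E\<bar>) (B1 / (2 * lam + mu))" if "E \<noteq> 0"
    using a3_bound[OF B1 s E1 E2 E3 E4 w v] that by (simp add: E_def x_def)
  show ?thesis
  proof (intro conjI impI)
    assume "x \<le> - (3 + mu) * c \<or> x \<ge> (1 - mu) * c"
    then have E: "2 * (2 * lam + mu) \<le> \<bar>E\<bar>"
      using regions(1) by blast
    have "2 * B1 / \<bar>E\<bar> \<le> 2 * B1 / (2 * (2 * lam + mu))"
      using E B1 s by (intro divide_left_mono) auto
    then have "2 * B1 / \<bar>E\<bar> \<le> B1 / (2 * lam + mu)"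
      by (simp only: half)
    then show "norm a3 \<le> B1 / (2 * lam + mu)"
      using bound E s by fastforce
  next
    assume "(- (3 + mu) * c \<le> x \<and> x < - (1 + mu) * c) \<or> (- (1 + mu) * c < x \<and> x \<le> (1 - mu) * c)"
    then have E: "E \<noteq> 0" "\<bar>E\<bar> \<le> 2 * (2 * lam + mu)"
      using regions(2) by blast+
    have "2 * B1 / (2 * (2 * lam + mu)) \<le> 2 * B1 / \<bar>E\<bar>"
      using E B1 s by (intro divide_left_mono) auto
    then have "B1 / (2 * lam + mu) \<le> 2 * B1 / \<bar>E\<bar>"
      by (simp only: half)
    moreover have "2 * B1 / \<bar>E\<bar>
        = 2 * B1 ^ 3 / \<bar>(2 * lam + mu) * (1 + mu) * B1 ^ 2 + 2 * (B1 - B2) * (lam + mu) ^ 2\<bar>"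
    proof -
      have "(2 * lam + mu) * (1 + mu) * B1 ^ 2 + 2 * (B1 - B2) * (lam + mu) ^ 2 = B1 ^ 2 * E"
        using B1 by (simp add: E_def x_def field_simps)
      then show ?thesis
        using B1 by (simp add: abs_mult power2_eq_square power3_eq_cube)
    qed
    ultimately show "norm a3 \<le> 2 * B1 ^ 3 / \<bar>(2 * lam + mu) * (1 + mu) * B1 ^ 2 + 2 * (B1 - B2) * (lam + mu) ^ 2\<bar>"
      using bound[OF E(1)] by simp
  qed
qed

theorem corollary3p2:
  fixes lam mu :: real and \<phi> f :: "complex \<Rightarrow> complex"
  assumes "lam \<ge> 1" and "mu \<ge> 0"
    and "admissible_phi \<phi>"
    and "N_class mu lam \<phi> f"
  defines "B1 \<equiv> Re (taylor_coeff \<phi> 1)" and "B2 \<equiv> Re (taylor_coeff \<phi> 2)"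
  defines "x \<equiv> (B1 - B2) / B1 ^ 2"
  defines "c \<equiv> (2 * lam + mu) / (2 * (lam + mu) ^ 2)"
  shows "(x \<le> - (3 + mu) * c \<or> x \<ge> (1 - mu) * c \<longrightarrow>
            norm (taylor_coeff f 3) \<le> B1 / (2 * lam + mu))
       \<and> ((- (3 + mu) * c \<le> x \<and> x < - (1 + mu) * c) \<or> (- (1 + mu) * c < x \<and> x \<le> (1 - mu) * c) \<longrightarrow>
            norm (taylor_coeff f 3) \<le>
              2 * B1 ^ 3 / \<bar>(2 * lam + mu) * (1 + mu) * B1 ^ 2 + 2 * (B1 - B2) * (lam + mu) ^ 2\<bar>)"
proof -
  from assms(4) obtain g where inv: "bi_univalent_inverse f g"
    and sub_f: "subordinate (N_operator mu lam f) \<phi>" and sub_g: "subordinate (N_operator mu lam g) \<phi>"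
    unfolding N_class_def bi_univalent_def by blast
  from inv have f: "f holomorphic_on UD" "f 0 = 0" "deriv f 0 = 1"
    unfolding bi_univalent_inverse_def normalized_univalent_def by blast+
  note g = bi_univalent_inverse_coeffs[OF inv]
  from assms(3) have hol\<phi>: "\<phi> holomorphic_on UD" and B1: "B1 > 0"
    and \<phi>_coeffs: "taylor_coeff \<phi> 1 = of_real B1" "taylor_coeff \<phi> 2 = of_real B2"
    unfolding admissible_phi_def B1_def B2_def by (simp_all add: of_real_Re)
  obtain w1 w2 where "norm w2 \<le> 1 - norm w1 ^ 2"
    "of_real (lam + mu) * taylor_coeff f 2 = of_real B1 * w1"
    "of_real (2 * lam + mu) * (taylor_coeff f 3 + of_real ((mu - 1) / 2) * taylor_coeff f 2 ^ 2)
       = of_real B1 * w2 + of_real B2 * w1 ^ 2"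
    using subordination_coeffs[OF hol\<phi> f sub_f] unfolding \<phi>_coeffs by blast
  moreover obtain v1 v2 where "norm v2 \<le> 1 - norm v1 ^ 2"
    "of_real (lam + mu) * (- taylor_coeff f 2) = of_real B1 * v1"
    "of_real (2 * lam + mu) * ((2 * taylor_coeff f 2 ^ 2 - taylor_coeff f 3)
       + of_real ((mu - 1) / 2) * (- taylor_coeff f 2) ^ 2) = of_real B1 * v2 + of_real B2 * v1 ^ 2"
    using subordination_coeffs[OF hol\<phi> g(1-3) sub_g] unfolding \<phi>_coeffs g(4,5) by blast
  ultimately show ?thesis
    unfolding x_def c_def using a3_bound_by_regions[OF assms(1,2) B1] by blast
qed

end
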